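(* Let $\mathcal S$ be a trajectory set satisfying (LOP) and (K). Then there is no generalized portfolio which is an arbitrage with respect to the $\|\cdot\|$-null sets.
   Context: Fix $s_0\in\mathbb R$. A trajectory set is any set $\mathcal S$ of real sequences $S=(S_j)_{j\in\mathbb N_0}$ with $S_0=s_0$. A simple portfolio $(V,n,H)$ consists of $V\in\mathbb R$, $n\in\mathbb N$ and nonanticipating functions $H_i:\mathcal S\to\mathbb R$, $0\le i\le n-1$ (i.e. $H_i(S)=h_i(S_0,\dots,S_i)$ for some arbitrary $h_i:\mathbb R^{i+1}\to\mathbb R$). Its wealth is $\Pi^{V,n,H}_j(S)=V+\sum_{i=0}^{\min\{j,n\}-1}H_i(S)(S_{i+1}-S_i)$ and $\Pi^{V,n,H}_\infty:=\Pi^{V,n,H}_n$; it is positive if $V\ge0$ and $\Pi^{V,n,H}_\infty\ge0$ on $\mathcal S$. A generalized portfolio is a sequence $(V_m,n_m,H_m)_{m\in\mathbb N_0}$ of simple portfolios, positive for every $m\ge1$; it is a positive generalized portfolio if moreover $\Pi^{V_0,n_0,H_0}_j\equiv0$ for all $j$. A map $f:\mathcal S\to[-\infty,+\infty]$ is superhedged with initial endowment $V=\sum_{m=0}^\infty V_m$ by such a portfolio if $f\le\sum_{m=0}^\infty\Pi^{V_m,n_m,H_m}_\infty$ on $\mathcal S$. For $f\ge0$, $\bar I(f)$ is the infimum of initial endowments of positive generalized portfolios superhedging $f$. Let $\mathcal E=\{\Pi^{V,n,H}_\infty\}$ over all simple portfolios. (LOP): whenever two simple portfolios have equal terminal wealth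 $\Pi_\infty$ at every $S\in\mathcal S$, their initial endowments coincide; under (LOP), $I:\mathcal E\to\mathbb R$, $I(\Pi^{V,n,H}_\infty)=V$, is well defined. (K): $I(f)+\bar I(f^-)\le\bar I(f^+)$ for every $f\in\mathcal E$ ($f^\pm$ positive/negative parts). Define $\|f\|:=\bar I(|f|)$; a null set is $A\subseteq\mathcal S$ with $\|\mathbf 1_A\|=0$. A generalized portfolio $(V_m,n_m,H_m)_{m\in\mathbb N_0}$ is an arbitrage with respect to the $\|\cdot\|$-null sets if $\sum_{m=0}^\infty V_m=0$, the set $\{S:\sum_{m=0}^\infty\Pi^{V_m,n_m,H_m}_\infty(S)<0\}$ is a null set, and the set $\{S:\sum_{m=0}^\infty\Pi^{V_m,n_m,H_m}_\infty(S)>0\}$ is not a null set. *)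

theory Defs
  imports "HOL-Library.Extended_Real" "HOL-Library.Indicator_Function"
begin

type_synonym traj = "nat \<Rightarrow> real"
type_synonym strategy = "nat \<Rightarrow> traj \<Rightarrow> real"
type_synonym sportf = "real \<times> nat \<times> strategy"

definition trajectory_set :: "real \<Rightarrow> traj set \<Rightarrow> bool" where
  "trajectory_set s0 \<S> \<longleftrightarrow> (\<forall>S\<in>\<S>. S 0 = s0)"

definition nonanticipating :: "traj set \<Rightarrow> nat \<Rightarrow> strategy \<Rightarrow> bool" where
  "nonanticipating \<S> n H \<longleftrightarrow>
     (\<forall>i<n. \<exists>h :: real list \<Rightarrow> real. \<forall>S\<in>\<S>. H i S = h (map S [0..<Suc i]))"

definition simple_portfolio :: "traj set \<Rightarrow> sportf \<Rightarrow> bool" where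
  "simple_portfolio \<S> p \<longleftrightarrow> (case p of (V, n, H) \<Rightarrow> n \<ge> 1 \<and> nonanticipating \<S> n H)"

definition endow :: "sportf \<Rightarrow> real" where
  "endow p = fst p"

definition wealth :: "sportf \<Rightarrow> nat \<Rightarrow> traj \<Rightarrow> real" where
  "wealth p j S = (case p of (V, n, H) \<Rightarrow>
      V + (\<Sum>i<min j n. H i S * (S (Suc i) - S i)))"

definition twealth :: "sportf \<Rightarrow> traj \<Rightarrow> real" where
  "twealth p S = wealth p (fst (snd p)) S"

definition positive_portfolio :: "traj set \<Rightarrow> sportf \<Rightarrow> bool" where
  "positive_portfolio \<S> p \<longleftrightarrow>
     simple_portfolio \<S> p \<and> endow p \<ge> 0 \<and> (\<forall>S\<in>\<S>. twealth p S \<ge> 0)"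

definition gen_portfolio :: "traj set \<Rightarrow> (nat \<Rightarrow> sportf) \<Rightarrow> bool" where
  "gen_portfolio \<S> P \<longleftrightarrow>
     simple_portfolio \<S> (P 0) \<and> (\<forall>m\<ge>1. positive_portfolio \<S> (P m))"

definition pos_gen_portfolio :: "traj set \<Rightarrow> (nat \<Rightarrow> sportf) \<Rightarrow> bool" where
  "pos_gen_portfolio \<S> P \<longleftrightarrow>
     gen_portfolio \<S> P \<and> (\<forall>j. \<forall>S\<in>\<S>. wealth (P 0) j S = 0)"

(* \<Sum>_{m\<ge>0} V_m, split as V_0 + \<Sum>_{m\<ge>1} V_m (the tail has nonnegative terms) *)
definition gen_endowment :: "(nat \<Rightarrow> sportf) \<Rightarrow> ereal" where
  "gen_endowment P = ereal (endow (P 0)) + (\<Sum>m. ereal (endow (P (Suc m))))"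

definition gen_wealth :: "(nat \<Rightarrow> sportf) \<Rightarrow> traj \<Rightarrow> ereal" where
  "gen_wealth P S = ereal (twealth (P 0) S) + (\<Sum>m. ereal (twealth (P (Suc m)) S))"

definition superhedges :: "traj set \<Rightarrow> (nat \<Rightarrow> sportf) \<Rightarrow> (traj \<Rightarrow> ereal) \<Rightarrow> bool" where
  "superhedges \<S> P f \<longleftrightarrow> (\<forall>S\<in>\<S>. f S \<le> gen_wealth P S)"

definition barI :: "traj set \<Rightarrow> (traj \<Rightarrow> ereal) \<Rightarrow> ereal" where
  "barI \<S> f = Inf {gen_endowment P | P. pos_gen_portfolio \<S> P \<and> superhedges \<S> P f}"

definition snorm :: "traj set \<Rightarrow> (traj \<Rightarrow> ereal) \<Rightarrow> ereal" where
  "snorm \<S> f = barI \<S> (\<lambda>S. \<bar>f S\<bar>)"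

definition null_set :: "traj set \<Rightarrow> traj set \<Rightarrow> bool" where
  "null_set \<S> A \<longleftrightarrow> A \<subseteq> \<S> \<and> snorm \<S> (indicator A) = 0"

definition LOP :: "traj set \<Rightarrow> bool" where
  "LOP \<S> \<longleftrightarrow> (\<forall>p q. simple_portfolio \<S> p \<and> simple_portfolio \<S> q \<and>
       (\<forall>S\<in>\<S>. twealth p S = twealth q S) \<longrightarrow> endow p = endow q)"

(* (K): I(f) + \<bar>I(f^-) \<le> \<bar>I(f^+) for f = \<Pi>_\<infinity> of a simple portfolio, I(f) = V *)
definition condK :: "traj set \<Rightarrow> bool" where
  "condK \<S> \<longleftrightarrow> (\<forall>p. simple_portfolio \<S> p \<longrightarrow>
       ereal (endow p) + barI \<S> (\<lambda>S. ereal (max 0 (- twealth p S)))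
         \<le> barI \<S> (\<lambda>S. ereal (max 0 (twealth p S))))"

definition arbitrage_null :: "traj set \<Rightarrow> (nat \<Rightarrow> sportf) \<Rightarrow> bool" where
  "arbitrage_null \<S> P \<longleftrightarrow> gen_portfolio \<S> P \<and> gen_endowment P = 0 \<and>
     null_set \<S> {S\<in>\<S>. gen_wealth P S < 0} \<and>
     \<not> null_set \<S> {S\<in>\<S>. gen_wealth P S > 0}"

end

theory Submission
  imports Defs "HOL-Analysis.Caratheodory"
begin

(*
  Let P be an arbitrage, let p_M be the simple portfolio formed by its first M + 1 constituents
  and let c >= 0. Condition (K), applied to -c p_M, bounds the outer integral of the positive
  part of c p_M by c times the endowment of p_M plus the outer integral of the negative part.
  Off the null set where P ends with negative wealth, the negative part is at most c times the
  wealth of the remaining constituents, which superhedge themselves at the cost of their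
  endowments; on the null set, paying +infinity costs nothing. As the endowments of P add up
  to 0, the positive part of c p_M has outer integral 0. Wherever P ends with positive wealth
  some n p_n has wealth at least 1, so by countable subadditivity of the outer integral that
  set is null.

  Neither (LOP) nor the initial value s0 is needed: (LOP) only serves to make I well defined,
  and (K) is formalised with the endowment V in place of I applied to the terminal wealth.
*)

section \<open>Series of extended reals\<close>

lemma suminf_ereal_2dimen:
  fixes g :: "nat \<Rightarrow> nat \<Rightarrow> ereal"
  assumes "\<And>j m. 0 \<le> g j m"
  shows "(\<Sum>k. g (fst (prod_decode k)) (snd (prod_decode k))) = (\<Sum>j. \<Sum>m. g j m)"
proof -
  define h where "h p = e2ennreal (g (fst p) (snd p))" for p
  have g_eq: "g j m = enn2ereal (h (j, m))" for j m
    using assms by (simp add: h_def enn2ereal_e2ennreal)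
  have "(\<Sum>k. h (prod_decode k)) = (\<Sum>j. \<Sum>m. h (j, m))"
    by (rule suminf_ennreal_2dimen) simp
  then have "enn2ereal (\<Sum>k. h (prod_decode k)) = enn2ereal (\<Sum>j. \<Sum>m. h (j, m))"
    by simp
  then show ?thesis
    by (simp add: g_eq)
qed

lemma suminf_ereal_split_initial_segment:
  fixes f :: "nat \<Rightarrow> ereal"
  assumes "\<And>j. 0 \<le> f j"
  shows "suminf f = (\<Sum>j<i. f j) + (\<Sum>j. f (j + i))"
proof -
  define h where "h j = e2ennreal (f j)" for j
  have f_eq: "f = (\<lambda>j. enn2ereal (h j))"
    using assms by (simp add: h_def enn2ereal_e2ennreal fun_eq_iff)
  have "suminf h = (\<Sum>j. h (j + i)) + (\<Sum>j<i. h j)"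
    by (rule suminf_offset) (rule summableI)
  then show ?thesis
    by (simp add: f_eq plus_ennreal.rep_eq add.commute)
qed

lemma suminf_ereal_one: "(\<Sum>j. 1 :: ereal) = \<infinity>"
  using summable_ereal[of "\<lambda>_. 1 :: real"] summable_const_iff[where 'a = real]
  by (auto simp: one_ereal_def)

section \<open>Operations on simple portfolios\<close>

definition zero_portfolio :: sportf where
  "zero_portfolio = (0, 1, \<lambda>i S. 0)"

definition scale_portfolio :: "real \<Rightarrow> sportf \<Rightarrow> sportf" where
  "scale_portfolio c p = (case p of (V, n, H) \<Rightarrow> (c * V, n, \<lambda>i S. c * H i S))"

definition add_portfolio :: "sportf \<Rightarrow> sportf \<Rightarrow> sportf" where
  "add_portfolio p q = (case p of (V, n, H) \<Rightarrow> case q of (V', n', H') \<Rightarrow>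
     (V + V', max n n', \<lambda>i S. (if i < n then H i S else 0) + (if i < n' then H' i S else 0)))"

primrec partial_portfolio :: "(nat \<Rightarrow> sportf) \<Rightarrow> nat \<Rightarrow> sportf" where
  "partial_portfolio P 0 = P 0"
| "partial_portfolio P (Suc M) = add_portfolio (partial_portfolio P M) (P (Suc M))"

lemma endow_eq [simp]: "endow (V, n, H) = V"
  by (simp add: endow_def)

lemma twealth_eq: "twealth (V, n, H) S = V + (\<Sum>i<n. H i S * (S (Suc i) - S i))"
  by (simp add: twealth_def wealth_def)

lemma nonanticipating_scale:
  assumes "nonanticipating \<S> n H"
  shows "nonanticipating \<S> n (\<lambda>i S. c * H i S)"
  unfolding nonanticipating_def
proof (intro allI impI)
  fix i assume "i < n"
  then obtain h where "\<forall>S\<in>\<S>. H i S = h (map S [0..<Suc i])"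
    using assms by (auto simp: nonanticipating_def)
  then show "\<exists>h. \<forall>S\<in>\<S>. c * H i S = h (map S [0..<Suc i])"
    by (intro exI[of _ "\<lambda>xs. c * h xs"]) simp
qed

lemma nonanticipating_add:
  assumes "nonanticipating \<S> n H" and "nonanticipating \<S> n' H'"
  shows "nonanticipating \<S> (max n n')
           (\<lambda>i S. (if i < n then H i S else 0) + (if i < n' then H' i S else 0))"
  unfolding nonanticipating_def
proof (intro allI impI)
  fix i
  obtain h where h: "i < n \<Longrightarrow> \<forall>S\<in>\<S>. H i S = h (map S [0..<Suc i])"
    using assms(1) by (auto simp: nonanticipating_def)
  obtain h' where h': "i < n' \<Longrightarrow> \<forall>S\<in>\<S>. H' i S = h' (map S [0..<Suc i])"
    using assms(2) by (auto simp: nonanticipating_def)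
  show "\<exists>g. \<forall>S\<in>\<S>. (if i < n then H i S else 0) + (if i < n' then H' i S else 0)
              = g (map S [0..<Suc i])"
    by (intro exI[of _ "\<lambda>xs. (if i < n then h xs else 0) + (if i < n' then h' xs else 0)"])
      (simp add: h h')
qed

lemma simple_portfolio_zero [simp]: "simple_portfolio \<S> zero_portfolio"
  by (auto simp: zero_portfolio_def simple_portfolio_def nonanticipating_def)

lemma simple_portfolio_scale:
  "simple_portfolio \<S> p \<Longrightarrow> simple_portfolio \<S> (scale_portfolio c p)"
  by (cases p) (simp add: simple_portfolio_def scale_portfolio_def nonanticipating_scale)

lemma simple_portfolio_add:
  "simple_portfolio \<S> p \<Longrightarrow> simple_portfolio \<S> q \<Longrightarrow> simple_portfolio \<S> (add_portfolio p q)"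
  by (cases p, cases q) (auto simp: simple_portfolio_def add_portfolio_def nonanticipating_add)

lemma simple_portfolio_partial:
  "(\<And>m. simple_portfolio \<S> (P m)) \<Longrightarrow> simple_portfolio \<S> (partial_portfolio P M)"
  by (induction M) (simp_all add: simple_portfolio_add)

lemma wealth_zero_portfolio [simp]: "wealth zero_portfolio j S = 0"
  by (simp add: zero_portfolio_def wealth_def)

lemma twealth_zero_portfolio [simp]: "twealth zero_portfolio S = 0"
  by (simp add: twealth_def)

lemma endow_zero_portfolio [simp]: "endow zero_portfolio = 0"
  by (simp add: zero_portfolio_def)

lemma endow_scale_portfolio [simp]: "endow (scale_portfolio c p) = c * endow p"
  by (cases p) (simp add: scale_portfolio_def)

lemma twealth_scale_portfolio [simp]: "twealth (scale_portfolio c p) S = c * twealth p S"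
  by (cases p) (simp add: scale_portfolio_def twealth_eq sum_distrib_left algebra_simps)

lemma endow_add_portfolio [simp]: "endow (add_portfolio p q) = endow p + endow q"
  by (cases p, cases q) (simp add: add_portfolio_def)

lemma twealth_add_portfolio [simp]:
  "twealth (add_portfolio p q) S = twealth p S + twealth q S"
proof (cases p, cases q)
  fix V n H V' n' H' assume pq: "p = (V, n, H)" "q = (V', n', H')"
  have truncate: "(\<Sum>i<max n n'. (if i < k then G i else 0) * d i) = (\<Sum>i<k. G i * d i)"
    if "k \<le> max n n'" for k G and d :: "nat \<Rightarrow> real"
    using that by (intro sum.mono_neutral_cong_right) auto
  show ?thesis
    by (simp add: pq add_portfolio_def twealth_eq distrib_right sum.distrib truncate)
qed

lemma endow_partial_portfolio:
  "endow (partial_portfolio P M) = endow (P 0) + (\<Sum>m<M. endow (P (Suc m)))"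
  by (induction M) simp_all

lemma twealth_partial_portfolio:
  "twealth (partial_portfolio P M) S = twealth (P 0) S + (\<Sum>m<M. twealth (P (Suc m)) S)"
  by (induction M) simp_all

lemma positive_portfolio_zero [simp]: "positive_portfolio \<S> zero_portfolio"
  by (simp add: positive_portfolio_def)

lemma positive_portfolio_scale:
  "positive_portfolio \<S> p \<Longrightarrow> 0 \<le> c \<Longrightarrow> positive_portfolio \<S> (scale_portfolio c p)"
  by (simp add: positive_portfolio_def simple_portfolio_scale)

section \<open>Generalized portfolios and the outer integral\<close>

lemma gen_portfolio_simple:
  "gen_portfolio \<S> P \<Longrightarrow> simple_portfolio \<S> (P m)"
  by (cases m) (auto simp: gen_portfolio_def positive_portfolio_def)

lemma gen_portfolio_positive:
  "gen_portfolio \<S> P \<Longrightarrow> positive_portfolio \<S> (P (Suc m))"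
  by (simp add: gen_portfolio_def)

lemma pos_gen_portfolio_head:
  assumes "pos_gen_portfolio \<S> P" and "S \<in> \<S>"
  shows "endow (P 0) = 0" and "twealth (P 0) S = 0"
proof -
  have wealth_0: "wealth (P 0) j S = 0" for j
    using assms by (auto simp: pos_gen_portfolio_def)
  from wealth_0[of 0] show "endow (P 0) = 0"
    by (cases "P 0") (simp add: wealth_def)
  from wealth_0 show "twealth (P 0) S = 0"
    by (simp add: twealth_def)
qed

lemma pos_gen_portfolio_case_nat:
  "(\<And>m. positive_portfolio \<S> (Q m)) \<Longrightarrow> pos_gen_portfolio \<S> (case_nat zero_portfolio Q)"
  by (auto simp: pos_gen_portfolio_def gen_portfolio_def split: nat.split)

lemma gen_endowment_case_nat:
  "gen_endowment (case_nat zero_portfolio Q) = (\<Sum>m. ereal (endow (Q m)))"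
  by (simp add: gen_endowment_def)

lemma gen_wealth_case_nat:
  "gen_wealth (case_nat zero_portfolio Q) S = (\<Sum>m. ereal (twealth (Q m) S))"
  by (simp add: gen_wealth_def)

lemma gen_endowment_pos_gen_portfolio:
  assumes "pos_gen_portfolio \<S> P" and "\<S> \<noteq> {}"
  shows "gen_endowment P = (\<Sum>m. ereal (endow (P (Suc m))))"
proof -
  from assms obtain S where "S \<in> \<S>" by blast
  with assms(1) show ?thesis
    by (simp add: gen_endowment_def pos_gen_portfolio_head)
qed

lemma gen_wealth_pos_gen_portfolio:
  "pos_gen_portfolio \<S> P \<Longrightarrow> S \<in> \<S> \<Longrightarrow> gen_wealth P S = (\<Sum>m. ereal (twealth (P (Suc m)) S))"
  by (simp add: gen_wealth_def pos_gen_portfolio_head)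

lemma pos_gen_portfolio_positive:
  "pos_gen_portfolio \<S> P \<Longrightarrow> positive_portfolio \<S> (P (Suc m))"
  by (simp add: pos_gen_portfolio_def gen_portfolio_positive)

lemma gen_endowment_nonneg:
  assumes "pos_gen_portfolio \<S> P" and "\<S> \<noteq> {}"
  shows "0 \<le> gen_endowment P"
  using pos_gen_portfolio_positive[OF assms(1)]
  by (auto simp: gen_endowment_pos_gen_portfolio[OF assms] positive_portfolio_def intro: suminf_0_le)

lemma barI_le_gen_endowment:
  "pos_gen_portfolio \<S> P \<Longrightarrow> superhedges \<S> P f \<Longrightarrow> barI \<S> f \<le> gen_endowment P"
  unfolding barI_def by (auto intro: Inf_lower)

lemma barI_less_imp_superhedging:
  assumes "barI \<S> f < x"
  obtains P where "pos_gen_portfolio \<S> P" "superhedges \<S> P f" "gen_endowment P < x"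
  using assms unfolding barI_def Inf_less_iff by blast

lemma barI_nonneg: "\<S> \<noteq> {} \<Longrightarrow> 0 \<le> barI \<S> f"
  unfolding barI_def by (rule Inf_greatest) (auto intro: gen_endowment_nonneg)

lemma barI_mono:
  assumes "\<And>S. S \<in> \<S> \<Longrightarrow> f S \<le> g S"
  shows "barI \<S> f \<le> barI \<S> g"
  unfolding barI_def
  by (rule Inf_superset_mono) (auto simp: superhedges_def intro: order_trans[OF assms])

lemma barI_suminf_twealth_le:
  assumes "\<And>m. positive_portfolio \<S> (Q m)"
  shows "barI \<S> (\<lambda>S. \<Sum>m. ereal (twealth (Q m) S)) \<le> (\<Sum>m. ereal (endow (Q m)))"
  using barI_le_gen_endowment[OF pos_gen_portfolio_case_nat[OF assms]]
  by (simp add: superhedges_def gen_wealth_case_nat gen_endowment_case_nat)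

lemma barI_zero:
  assumes "\<S> \<noteq> {}"
  shows "barI \<S> (\<lambda>S. 0) = 0"
proof (rule antisym)
  show "barI \<S> (\<lambda>S. 0) \<le> 0"
    using barI_suminf_twealth_le[of \<S> "\<lambda>_. zero_portfolio"] by (simp add: zero_ereal_def[symmetric])
qed (rule barI_nonneg[OF assms])

lemma barI_suminf_le_suminf_gen_endowment:
  assumes ne: "\<S> \<noteq> {}"
    and PP: "\<And>j. pos_gen_portfolio \<S> (PP j)" "\<And>j. superhedges \<S> (PP j) (f j)"
    and f_nonneg: "\<And>j S. S \<in> \<S> \<Longrightarrow> 0 \<le> f j S"
  shows "barI \<S> (\<lambda>S. \<Sum>j. f j S) \<le> (\<Sum>j. gen_endowment (PP j))"
proof -
  define Q where "Q k = PP (fst (prod_decode k)) (Suc (snd (prod_decode k)))" for k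
  have pos: "positive_portfolio \<S> (PP j (Suc m))" for j m
    using PP(1) by (rule pos_gen_portfolio_positive)
  then have "pos_gen_portfolio \<S> (case_nat zero_portfolio Q)"
    by (simp add: Q_def pos_gen_portfolio_case_nat)
  moreover have "superhedges \<S> (case_nat zero_portfolio Q) (\<lambda>S. \<Sum>j. f j S)"
    unfolding superhedges_def
  proof
    fix S assume S: "S \<in> \<S>"
    have "(\<Sum>j. f j S) \<le> (\<Sum>j. gen_wealth (PP j) S)"
      using PP(2) S f_nonneg by (intro suminf_le_pos) (auto simp: superhedges_def)
    also have "\<dots> = (\<Sum>j. \<Sum>m. ereal (twealth (PP j (Suc m)) S))"
      by (simp add: gen_wealth_pos_gen_portfolio[OF PP(1) S])
    also have "\<dots> = gen_wealth (case_nat zero_portfolio Q) S"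
      unfolding gen_wealth_case_nat Q_def
      by (rule suminf_ereal_2dimen[symmetric]) (use pos S in \<open>simp add: positive_portfolio_def\<close>)
    finally show "(\<Sum>j. f j S) \<le> gen_wealth (case_nat zero_portfolio Q) S" .
  qed
  ultimately have "barI \<S> (\<lambda>S. \<Sum>j. f j S) \<le> gen_endowment (case_nat zero_portfolio Q)"
    by (rule barI_le_gen_endowment)
  also have "\<dots> = (\<Sum>j. \<Sum>m. ereal (endow (PP j (Suc m))))"
    unfolding gen_endowment_case_nat Q_def
    by (rule suminf_ereal_2dimen) (use pos in \<open>simp add: positive_portfolio_def\<close>)
  also have "\<dots> = (\<Sum>j. gen_endowment (PP j))"
    by (simp add: gen_endowment_pos_gen_portfolio[OF PP(1) ne])
  finally show ?thesis .
qed

lemma barI_suminf_le: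
  assumes ne: "\<S> \<noteq> {}" and f_nonneg: "\<And>j S. S \<in> \<S> \<Longrightarrow> 0 \<le> f j S"
  shows "barI \<S> (\<lambda>S. \<Sum>j. f j S) \<le> (\<Sum>j. barI \<S> (f j))"
proof (cases "(\<Sum>j. barI \<S> (f j)) = \<infinity>")
  case False
  have finite: "barI \<S> (f j) \<noteq> \<infinity>" for j
    using suminf_PInfty[OF barI_nonneg[OF ne] False] .
  show ?thesis
  proof (rule ereal_le_epsilon2)
    fix e :: real assume "0 < e"
    define \<epsilon> where "\<epsilon> j = ereal (e * (1/2) ^ Suc j)" for j
    have "\<exists>P. pos_gen_portfolio \<S> P \<and> superhedges \<S> P (f j) \<and> gen_endowment P < barI \<S> (f j) + \<epsilon> j"
      for j
    proof -
      have "barI \<S> (f j) < barI \<S> (f j) + \<epsilon> j"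
        using finite[of j] barI_nonneg[OF ne, of "f j"] \<open>0 < e\<close>
        by (cases "barI \<S> (f j)") (auto simp: \<epsilon>_def)
      then show ?thesis
        by (rule barI_less_imp_superhedging) blast
    qed
    then obtain PP where PP: "\<And>j. pos_gen_portfolio \<S> (PP j)" "\<And>j. superhedges \<S> (PP j) (f j)"
      "\<And>j. gen_endowment (PP j) < barI \<S> (f j) + \<epsilon> j"
      by metis
    have "barI \<S> (\<lambda>S. \<Sum>j. f j S) \<le> (\<Sum>j. gen_endowment (PP j))"
      using ne PP(1,2) f_nonneg by (rule barI_suminf_le_suminf_gen_endowment)
    also have "\<dots> \<le> (\<Sum>j. barI \<S> (f j) + \<epsilon> j)"
      by (rule suminf_le_pos) (simp_all add: less_imp_le PP(3) gen_endowment_nonneg[OF PP(1) ne])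
    also have "\<dots> = (\<Sum>j. barI \<S> (f j)) + (\<Sum>j. \<epsilon> j)"
      using barI_nonneg[OF ne] \<open>0 < e\<close> by (intro suminf_add_ereal) (simp_all add: \<epsilon>_def)
    also have "(\<Sum>j. \<epsilon> j) = ereal e"
      unfolding \<epsilon>_def using sums_mult[OF power_half_series, of e] by (simp add: sums_suminf_ereal)
    finally show "barI \<S> (\<lambda>S. \<Sum>j. f j S) \<le> (\<Sum>j. barI \<S> (f j)) + ereal e" .
  qed
qed simp

lemma barI_add_le:
  assumes ne: "\<S> \<noteq> {}"
    and nonneg: "\<And>S. S \<in> \<S> \<Longrightarrow> 0 \<le> f S" "\<And>S. S \<in> \<S> \<Longrightarrow> 0 \<le> g S"
  shows "barI \<S> (\<lambda>S. f S + g S) \<le> barI \<S> f + barI \<S> g"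
proof -
  define F where "F j = (if j = 0 then f else if j = 1 then g else (\<lambda>S. 0))" for j :: nat
  have suminf_two_terms: "(\<Sum>j. h j) = h 0 + h 1" if "\<And>j. j > 1 \<Longrightarrow> h j = 0" for h :: "nat \<Rightarrow> ereal"
    using that by (subst suminf_finite[where N = "{0, 1}"]) auto
  have "barI \<S> (\<lambda>S. f S + g S) \<le> barI \<S> (\<lambda>S. \<Sum>j. F j S)"
    by (rule barI_mono) (simp add: suminf_two_terms F_def)
  also have "\<dots> \<le> (\<Sum>j. barI \<S> (F j))"
    using nonneg by (intro barI_suminf_le[OF ne]) (simp add: F_def)
  also have "\<dots> = barI \<S> f + barI \<S> g"
    by (simp add: suminf_two_terms F_def barI_zero[OF ne])
  finally show ?thesis .
qed

(* Without trajectories the head of a positive generalized portfolio is unconstrained,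
   so every outer integral is negative. *)
lemma null_set_nonempty_trajectories:
  assumes "null_set \<S> A"
  shows "\<S> \<noteq> {}"
proof
  assume "\<S> = {}"
  define P where "P = case_nat (-1, 1, \<lambda>i S. 0) (\<lambda>_. zero_portfolio)"
  have "pos_gen_portfolio {} P"
    by (auto simp: P_def pos_gen_portfolio_def gen_portfolio_def simple_portfolio_def
        nonanticipating_def split: nat.split)
  then have "barI {} f \<le> gen_endowment P" for f
    by (rule barI_le_gen_endowment) (simp add: superhedges_def)
  moreover have "gen_endowment P = ereal (-1)"
    by (simp add: P_def gen_endowment_def zero_ereal_def[symmetric])
  ultimately have "barI {} (\<lambda>S. \<bar>indicator A S\<bar>) \<noteq> 0"
    by (metis ereal_less_eq(3) le_minus_one_simps(3) zero_ereal_def)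
  then show False
    using assms \<open>\<S> = {}\<close> by (simp add: null_set_def snorm_def)
qed

lemma barI_infinity_on_null_set:
  assumes "null_set \<S> N"
  shows "barI \<S> (\<lambda>S. if S \<in> N then \<infinity> else 0) = 0"
proof -
  have ne: "\<S> \<noteq> {}"
    using assms by (rule null_set_nonempty_trajectories)
  have "barI \<S> (\<lambda>S. if S \<in> N then \<infinity> else 0) \<le> barI \<S> (\<lambda>S. \<Sum>j. \<bar>indicator N S\<bar>)"
    by (rule barI_mono) (simp add: indicator_def suminf_ereal_one)
  also have "\<dots> \<le> (\<Sum>j. barI \<S> (\<lambda>S. \<bar>indicator N S\<bar>))"
    by (rule barI_suminf_le[OF ne]) simp
  also have "\<dots> = 0"
    using assms by (simp add: null_set_def snorm_def)
  finally show ?thesis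
    using barI_nonneg[OF ne] by (rule antisym)
qed

lemma null_setI_countable_cover:
  fixes g :: "nat \<Rightarrow> traj \<Rightarrow> ereal"
  assumes ne: "\<S> \<noteq> {}" and "A \<subseteq> \<S>"
    and g_nonneg: "\<And>i S. S \<in> \<S> \<Longrightarrow> 0 \<le> g i S" and g_null: "\<And>i. barI \<S> (g i) \<le> 0"
    and cover: "\<And>S. S \<in> A \<Longrightarrow> \<exists>i. 1 \<le> g i S"
  shows "null_set \<S> A"
proof -
  have "barI \<S> (\<lambda>S. \<bar>indicator A S\<bar>) \<le> barI \<S> (\<lambda>S. \<Sum>i. g i S)"
  proof (rule barI_mono)
    fix S assume S: "S \<in> \<S>"
    show "\<bar>indicator A S\<bar> \<le> (\<Sum>i. g i S)"
    proof (cases "S \<in> A")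
      case True
      then obtain i where "1 \<le> g i S"
        using cover by blast
      also have "\<dots> \<le> (\<Sum>i. g i S)"
        using sum_le_suminf[OF summable_ereal_pos, of "\<lambda>i. g i S" "{i}"] g_nonneg S by simp
      finally show ?thesis
        using True by simp
    qed (use g_nonneg S in \<open>simp add: suminf_0_le\<close>)
  qed
  also have "\<dots> \<le> (\<Sum>i. barI \<S> (g i))"
    using g_nonneg by (rule barI_suminf_le[OF ne])
  also have "\<dots> \<le> 0"
    using g_null suminf_le_pos[of "\<lambda>i. barI \<S> (g i)" "\<lambda>_. 0"] barI_nonneg[OF ne] by simp
  finally have "barI \<S> (\<lambda>S. \<bar>indicator A S\<bar>) = 0"
    using barI_nonneg[OF ne] by (rule antisym)
  with \<open>A \<subseteq> \<S>\<close> show ?thesis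
    by (simp add: null_set_def snorm_def)
qed

section \<open>Arbitrage with respect to null sets\<close>

lemma condK_barI_pos_part_le:
  assumes "condK \<S>" and "simple_portfolio \<S> p"
  shows "barI \<S> (\<lambda>S. ereal (max 0 (twealth p S)))
           \<le> ereal (endow p) + barI \<S> (\<lambda>S. ereal (max 0 (- twealth p S)))"
proof -
  have "ereal (- endow p) + barI \<S> (\<lambda>S. ereal (max 0 (twealth p S)))
          \<le> barI \<S> (\<lambda>S. ereal (max 0 (- twealth p S)))"
    using assms simple_portfolio_scale[of \<S> p "-1"] unfolding condK_def by fastforce
  then show ?thesis
    by (cases "barI \<S> (\<lambda>S. ereal (max 0 (twealth p S)))";
        cases "barI \<S> (\<lambda>S. ereal (max 0 (- twealth p S)))") auto
qed

lemma gen_endowment_eq_0_sums: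
  assumes "gen_portfolio \<S> P" and "gen_endowment P = 0"
  shows "(\<lambda>m. endow (P (Suc m))) sums (- endow (P 0))"
proof -
  have nonneg: "0 \<le> endow (P (Suc m))" for m
    using gen_portfolio_positive[OF assms(1)] by (simp add: positive_portfolio_def)
  have "ereal (endow (P 0)) + (\<Sum>m. ereal (endow (P (Suc m)))) = 0"
    using assms(2) by (simp add: gen_endowment_def)
  moreover have "0 \<le> (\<Sum>m. ereal (endow (P (Suc m))))"
    using nonneg by (simp add: suminf_0_le)
  ultimately have "(\<Sum>m. ereal (endow (P (Suc m)))) = ereal (- endow (P 0))"
    by (cases "\<Sum>m. ereal (endow (P (Suc m)))") auto
  moreover have "(\<lambda>m. ereal (endow (P (Suc m)))) sums (\<Sum>m. ereal (endow (P (Suc m))))"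
    using nonneg by (intro summable_sums summable_ereal_pos) simp
  ultimately show ?thesis
    by (simp add: sums_ereal)
qed

lemma gen_wealth_split:
  assumes "\<And>m. 0 \<le> twealth (P (Suc m)) S"
  shows "gen_wealth P S
           = ereal (twealth (partial_portfolio P M) S) + (\<Sum>j. ereal (twealth (P (Suc (j + M))) S))"
proof -
  have "(\<Sum>m. ereal (twealth (P (Suc m)) S))
          = ereal (\<Sum>m<M. twealth (P (Suc m)) S) + (\<Sum>j. ereal (twealth (P (Suc (j + M))) S))"
    using assms by (subst suminf_ereal_split_initial_segment[where i = M]) simp_all
  then show ?thesis
    by (simp add: gen_wealth_def twealth_partial_portfolio add.assoc[symmetric])
qed

lemma barI_neg_part_partial_portfolio_le:
  assumes P: "gen_portfolio \<S> P" and null: "null_set \<S> {S \<in> \<S>. gen_wealth P S < 0}"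
    and c: "0 \<le> c"
  shows "barI \<S> (\<lambda>S. ereal (max 0 (- (c * twealth (partial_portfolio P M) S))))
           \<le> (\<Sum>j. ereal (c * endow (P (Suc (j + M)))))"
proof -
  define N where "N = {S \<in> \<S>. gen_wealth P S < 0}"
  define tail where "tail S = (\<Sum>j. ereal (c * twealth (P (Suc (j + M))) S))" for S
  have pos: "positive_portfolio \<S> (scale_portfolio c (P (Suc (j + M))))" for j
    using gen_portfolio_positive[OF P] c by (rule positive_portfolio_scale)
  have pi_nonneg: "S \<in> \<S> \<Longrightarrow> 0 \<le> twealth (P (Suc m)) S" for S m
    using gen_portfolio_positive[OF P] by (simp add: positive_portfolio_def)
  have tail_nonneg: "S \<in> \<S> \<Longrightarrow> 0 \<le> tail S" for S
    unfolding tail_def using pi_nonneg c by (simp add: suminf_0_le)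
  have ne: "\<S> \<noteq> {}"
    using null by (rule null_set_nonempty_trajectories)
  have "barI \<S> (\<lambda>S. ereal (max 0 (- (c * twealth (partial_portfolio P M) S))))
          \<le> barI \<S> (\<lambda>S. tail S + (if S \<in> N then \<infinity> else 0))"
  proof (rule barI_mono)
    fix S assume S: "S \<in> \<S>"
    show "ereal (max 0 (- (c * twealth (partial_portfolio P M) S))) \<le> tail S + (if S \<in> N then \<infinity> else 0)"
    proof (cases "S \<in> N")
      case False
      define T where "T = (\<Sum>j. ereal (twealth (P (Suc (j + M))) S))"
      have "0 \<le> gen_wealth P S"
        using S False by (auto simp: N_def)
      then have T_ge: "0 \<le> ereal (twealth (partial_portfolio P M) S) + T"
        unfolding T_def by (simp add: gen_wealth_split[of P S M, OF pi_nonneg[OF S]])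
      have "0 \<le> T"
        unfolding T_def using pi_nonneg[OF S] by (simp add: suminf_0_le)
      have "tail S = ereal c * T"
        unfolding tail_def T_def using pi_nonneg[OF S] c
        by (subst suminf_cmult_ereal[symmetric]) simp_all
      moreover have "ereal (max 0 (- (c * twealth (partial_portfolio P M) S))) \<le> ereal c * T"
      proof (cases T)
        case (real t)
        with T_ge c have "0 \<le> c * (twealth (partial_portfolio P M) S + t)"
          by simp
        moreover have "0 \<le> c * t"
          using real c \<open>0 \<le> T\<close> by simp
        ultimately show ?thesis
          using real by (simp add: algebra_simps)
      qed (use \<open>0 \<le> T\<close> c in auto)
      ultimately show ?thesis
        using False by simp
    qed (use tail_nonneg[OF S] in simp)
  qed
  also have "\<dots> \<le> barI \<S> tail + barI \<S> (\<lambda>S. if S \<in> N then \<infinity> else 0)"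
    using ne tail_nonneg by (rule barI_add_le) auto
  also have "\<dots> = barI \<S> tail"
    using null by (simp add: barI_infinity_on_null_set flip: N_def)
  also have "\<dots> \<le> (\<Sum>j. ereal (c * endow (P (Suc (j + M)))))"
    using barI_suminf_twealth_le[of \<S> "\<lambda>j. scale_portfolio c (P (Suc (j + M)))", OF pos]
    by (simp add: tail_def[abs_def])
  finally show ?thesis .
qed

lemma barI_pos_part_partial_portfolio_le_0:
  assumes K: "condK \<S>" and P: "gen_portfolio \<S> P" and endow_0: "gen_endowment P = 0"
    and null: "null_set \<S> {S \<in> \<S>. gen_wealth P S < 0}" and c: "0 \<le> c"
  shows "barI \<S> (\<lambda>S. ereal (max 0 (c * twealth (partial_portfolio P M) S))) \<le> 0"
proof -
  define v where "v m = endow (P (Suc m))" for m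
  have v_sums: "v sums (- endow (P 0))"
    unfolding v_def using P endow_0 by (rule gen_endowment_eq_0_sums)
  then have v_tail: "endow (partial_portfolio P M) + (\<Sum>j. v (j + M)) = 0"
    using suminf_split_initial_segment[OF sums_summable[OF v_sums], of M]
    by (simp add: endow_partial_portfolio v_def sums_iff)
  have "summable (\<lambda>j. c * v (j + M))"
    using sums_summable[OF v_sums] by (simp add: summable_mult summable_ignore_initial_segment)
  then have c_tail: "(\<Sum>j. ereal (c * v (j + M))) = ereal (c * (\<Sum>j. v (j + M)))"
    by (simp add: suminf_ereal' suminf_mult summable_ignore_initial_segment sums_summable[OF v_sums])
  define p where "p = scale_portfolio c (partial_portfolio P M)"
  have "simple_portfolio \<S> p"
    unfolding p_def using gen_portfolio_simple[OF P]
    by (intro simple_portfolio_scale simple_portfolio_partial)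
  then have "barI \<S> (\<lambda>S. ereal (max 0 (twealth p S)))
               \<le> ereal (endow p) + barI \<S> (\<lambda>S. ereal (max 0 (- twealth p S)))"
    by (rule condK_barI_pos_part_le[OF K])
  also have "\<dots> \<le> ereal (endow p) + ereal (c * (\<Sum>j. v (j + M)))"
    using barI_neg_part_partial_portfolio_le[OF P null c, of M] c_tail
    by (intro add_left_mono) (simp add: p_def v_def)
  also have "\<dots> = 0"
    using v_tail by (simp add: p_def flip: distrib_left)
  finally show ?thesis
    by (simp add: p_def)
qed

lemma gen_wealth_pos_imp_partial_portfolio:
  assumes nonneg: "\<And>m. 0 \<le> twealth (P (Suc m)) S" and pos: "0 < gen_wealth P S"
  obtains n where "1 \<le> real n * twealth (partial_portfolio P n) S"
proof -
  have "ereal (- twealth (P 0) S) < (\<Sum>m. ereal (twealth (P (Suc m)) S))"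
    using pos by (cases "\<Sum>m. ereal (twealth (P (Suc m)) S)") (auto simp: gen_wealth_def)
  also have "\<dots> = (SUP n. \<Sum>m<n. ereal (twealth (P (Suc m)) S))"
    using nonneg by (simp add: suminf_ereal_eq_SUP)
  finally obtain M where "ereal (- twealth (P 0) S) < (\<Sum>m<M. ereal (twealth (P (Suc m)) S))"
    by (auto simp: less_SUP_iff)
  then have M: "0 < twealth (partial_portfolio P M) S"
    by (simp add: twealth_partial_portfolio)
  obtain k :: nat where "1 < real k * twealth (partial_portfolio P M) S"
    using reals_Archimedean3[OF M] by blast
  then have "1 \<le> real k * twealth (partial_portfolio P M) S"
    by simp
  also have "\<dots> \<le> real (max M k) * twealth (partial_portfolio P (max M k)) S"
  proof (rule mult_mono)
    show "twealth (partial_portfolio P M) S \<le> twealth (partial_portfolio P (max M k)) S"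
      unfolding twealth_partial_portfolio using nonneg by (intro add_left_mono sum_mono2) auto
  qed (use M in auto)
  finally show ?thesis
    by (rule that)
qed

theorem theorem4p5:
  fixes s0 :: real and \<S> :: "traj set"
  assumes "trajectory_set s0 \<S>" and "LOP \<S>" and "condK \<S>"
  shows "\<not> (\<exists>P. arbitrage_null \<S> P)"
proof
  assume "\<exists>P. arbitrage_null \<S> P"
  then obtain P where P: "gen_portfolio \<S> P" and endow_0: "gen_endowment P = 0"
    and null: "null_set \<S> {S \<in> \<S>. gen_wealth P S < 0}"
    and not_null: "\<not> null_set \<S> {S \<in> \<S>. gen_wealth P S > 0}"
    unfolding arbitrage_null_def by blast
  define g where "g n S = ereal (max 0 (real n * twealth (partial_portfolio P n) S))" for n S
  have "null_set \<S> {S \<in> \<S>. gen_wealth P S > 0}"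
  proof (rule null_setI_countable_cover)
    show "\<S> \<noteq> {}"
      using null by (rule null_set_nonempty_trajectories)
    show "barI \<S> (g n) \<le> 0" for n
      unfolding g_def using assms(3) P endow_0 null by (rule barI_pos_part_partial_portfolio_le_0) simp
    show "\<exists>n. 1 \<le> g n S" if "S \<in> {S \<in> \<S>. 0 < gen_wealth P S}" for S
    proof -
      have "0 \<le> twealth (P (Suc m)) S" for m
        using that gen_portfolio_positive[OF P] by (simp add: positive_portfolio_def)
      moreover have "0 < gen_wealth P S"
        using that by simp
      ultimately obtain n where "1 \<le> real n * twealth (partial_portfolio P n) S"
        by (rule gen_wealth_pos_imp_partial_portfolio)
      then have "1 \<le> g n S"
        by (simp add: g_def le_max_iff_disj)
      then show ?thesis ..
    qed
  qed (auto simp: g_def le_max_iff_disj)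
  with not_null show False ..
qed

end
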